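(* In $\mathcal{H}eis_k$, with $\tau,c',d',x'$ as in the context, the following relations hold: $\tau\circ(x'\otimes 1_\uparrow)-(1_\uparrow\otimes x')\circ\tau=c'\circ d'$, $\quad\tau\circ(1_\downarrow\otimes x)-(x\otimes 1_\downarrow)\circ\tau=c'\circ d'$, $d'\circ(1_\downarrow\otimes x)=d'\circ(x'\otimes 1_\uparrow)$, $\quad(x\otimes 1_\downarrow)\circ c'=(1_\uparrow\otimes x')\circ c'$.
   Context: Fix a commutative ring $\Bbbk$ and an integer $k$. In a strict monoidal category write $\mathbf 1$ for the unit object, $1_X$ for the identity, $a\circ b$ for composition, $a\otimes b$ for tensor product, $x^n$ for the $n$-fold composite. The Heisenberg category $\mathcal{H}eis_k$ is the strict $\Bbbk$-linear monoidal category generated by objects $\uparrow,\downarrow$ and morphisms $x:\uparrow\to\uparrow$, $s:\uparrow\otimes\uparrow\to\uparrow\otimes\uparrow$, $c:\mathbf 1\to\downarrow\otimes\uparrow$, $d:\uparrow\otimes\downarrow\to\mathbf 1$, subject to the following relations, where $t:=(1_\downarrow\otimes 1_\uparrow\otimes d)\circ(1_\downarrow\otimes s\otimes 1_\downarrow)\circ(c\otimes 1_\uparrow\otimes 1_\downarrow):\uparrow\otimes\downarrow\to\downarrow\otimes\uparrow$: (H) $s\circ s=1_{\uparrow\otimes\uparrow}$; $(s\otimes 1_\uparrow)\circ(1_\uparrow\otimes s)\circ(s\otimes 1_\uparrow)=(1_\uparrow\otimes s)\circ(s\otimes 1_\uparrow)\circ(1_\uparrow\otimes s)$; $(x\otimes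 1_\uparrow)\circ s-s\circ(1_\uparrow\otimes x)=1_{\uparrow\otimes\uparrow}$. (A) $(d\otimes 1_\uparrow)\circ(1_\uparrow\otimes c)=1_\uparrow$ and $(1_\downarrow\otimes d)\circ(c\otimes 1_\downarrow)=1_\downarrow$. (I) If $k\ge0$, the morphism $\uparrow\otimes\downarrow\to(\downarrow\otimes\uparrow)\oplus\mathbf 1^{\oplus k}$ with components $t$ and $d\circ(x^r\otimes 1_\downarrow)$, $r=0,\dots,k-1$, is an isomorphism in the additive envelope; if $k<0$, the morphism $(\uparrow\otimes\downarrow)\oplus\mathbf 1^{\oplus(-k)}\to\downarrow\otimes\uparrow$ with components $t$ and $(1_\downarrow\otimes x^r)\circ c$, $r=0,\dots,-k-1$, is an isomorphism in the additive envelope (formally, the entries of a two-sided inverse matrix are adjoined as generators). If $k\ge0$ the inverse in (I) has components $\tau:\downarrow\otimes\uparrow\to\uparrow\otimes\downarrow$ and $e_r:\mathbf 1\to\uparrow\otimes\downarrow$ ($0\le r<k$); if $k<0$ it has components $\tau:\downarrow\otimes\uparrow\to\uparrow\otimes\downarrow$ and $f_r:\downarrow\otimes\uparrow\to\mathbf 1$ ($0\le r<-k$). Set $c':=-e_{k-1}$ if $k>0$, $c':=\tau\circ(1_\downarrow\otimes x^{-k})\circ c$ if $k\le0$; $d':=d\circ(x^k\otimes1_\downarrow)\circ\tau$ if $k\ge0$, $d':=f_{-k-1}$ if $k<0$. Let $x':=(1_\downarrow\otimes d)\circ(1_\downarrow\otimes x\otimes 1_\downarrow)\circ(c\otimes 1_\downarrow):\downarrow\to\downarrow$.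 *)

theory Defs
  imports Main
begin

text \<open>A strict \<Bbbk>-linear monoidal category, encoded concretely: objects of type 'o,
  morphisms of type 'm (each morphism lies in at most one hom-set), scalars of type 'k.
  comp g f is g composed after f.\<close>

record ('o,'m,'k) slmcat =
  hom :: "'o \<Rightarrow> 'o \<Rightarrow> 'm set"
  comp :: "'m \<Rightarrow> 'm \<Rightarrow> 'm"
  tens :: "'m \<Rightarrow> 'm \<Rightarrow> 'm"
  ident :: "'o \<Rightarrow> 'm"
  otens :: "'o \<Rightarrow> 'o \<Rightarrow> 'o"
  ounit :: "'o"
  madd :: "'m \<Rightarrow> 'm \<Rightarrow> 'm"
  mzero :: "'o \<Rightarrow> 'o \<Rightarrow> 'm"
  smul :: "'k \<Rightarrow> 'm \<Rightarrow> 'm"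

definition slm_cat :: "('o,'m,'k::comm_ring_1) slmcat \<Rightarrow> bool" where
  "slm_cat C \<longleftrightarrow>
    \<comment> \<open>hom-sets are disjoint\<close>
    (\<forall>A B A' B' f. f \<in> hom C A B \<longrightarrow> f \<in> hom C A' B' \<longrightarrow> A = A' \<and> B = B') \<and>
    \<comment> \<open>category\<close>
    (\<forall>A. ident C A \<in> hom C A A) \<and>
    (\<forall>A B D f g. f \<in> hom C A B \<longrightarrow> g \<in> hom C B D \<longrightarrow> comp C g f \<in> hom C A D) \<and>
    (\<forall>A B D E f g h. f \<in> hom C A B \<longrightarrow> g \<in> hom C B D \<longrightarrow> h \<in> hom C D E \<longrightarrow>
        comp C (comp C h g) f = comp C h (comp C g f)) \<and>
    (\<forall>A B f. f \<in> hom C A B \<longrightarrow> comp C (ident C B) f = f \<and> comp C f (ident C A) = f) \<and>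
    \<comment> \<open>each hom-set is a module over 'k\<close>
    (\<forall>A B. mzero C A B \<in> hom C A B) \<and>
    (\<forall>A B f g. f \<in> hom C A B \<longrightarrow> g \<in> hom C A B \<longrightarrow> madd C f g \<in> hom C A B) \<and>
    (\<forall>A B a f. f \<in> hom C A B \<longrightarrow> smul C a f \<in> hom C A B) \<and>
    (\<forall>A B f g h. f \<in> hom C A B \<longrightarrow> g \<in> hom C A B \<longrightarrow> h \<in> hom C A B \<longrightarrow>
        madd C (madd C f g) h = madd C f (madd C g h)) \<and>
    (\<forall>A B f g. f \<in> hom C A B \<longrightarrow> g \<in> hom C A B \<longrightarrow> madd C f g = madd C g f) \<and>
    (\<forall>A B f. f \<in> hom C A B \<longrightarrow> madd C f (mzero C A B) = f) \<and>
    (\<forall>A B f. f \<in> hom C A B \<longrightarrow> madd C f (smul C (-1) f) = mzero C A B) \<and>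
    (\<forall>A B f g a. f \<in> hom C A B \<longrightarrow> g \<in> hom C A B \<longrightarrow>
        smul C a (madd C f g) = madd C (smul C a f) (smul C a g)) \<and>
    (\<forall>A B f a b. f \<in> hom C A B \<longrightarrow> smul C (a + b) f = madd C (smul C a f) (smul C b f)) \<and>
    (\<forall>A B f a b. f \<in> hom C A B \<longrightarrow> smul C (a * b) f = smul C a (smul C b f)) \<and>
    (\<forall>A B f. f \<in> hom C A B \<longrightarrow> smul C 1 f = f) \<and>
    \<comment> \<open>composition is bilinear\<close>
    (\<forall>A B D f g g'. f \<in> hom C A B \<longrightarrow> g \<in> hom C B D \<longrightarrow> g' \<in> hom C B D \<longrightarrow>
        comp C (madd C g g') f = madd C (comp C g f) (comp C g' f)) \<and>
    (\<forall>A B D f f' g. f \<in> hom C A B \<longrightarrow> f' \<in> hom C A B \<longrightarrow> g \<in> hom C B D \<longrightarrow>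
        comp C g (madd C f f') = madd C (comp C g f) (comp C g f')) \<and>
    (\<forall>A B D f g a. f \<in> hom C A B \<longrightarrow> g \<in> hom C B D \<longrightarrow>
        comp C (smul C a g) f = smul C a (comp C g f) \<and> comp C g (smul C a f) = smul C a (comp C g f)) \<and>
    \<comment> \<open>strict monoidal structure on objects\<close>
    (\<forall>A B D. otens C (otens C A B) D = otens C A (otens C B D)) \<and>
    (\<forall>A. otens C (ounit C) A = A \<and> otens C A (ounit C) = A) \<and>
    \<comment> \<open>tensor product of morphisms\<close>
    (\<forall>A B A' B' f g. f \<in> hom C A B \<longrightarrow> g \<in> hom C A' B' \<longrightarrow>
        tens C f g \<in> hom C (otens C A A') (otens C B B')) \<and>
    (\<forall>A B A' B' A'' B'' f g h. f \<in> hom C A B \<longrightarrow> g \<in> hom C A' B' \<longrightarrow> h \<in> hom C A'' B'' \<longrightarrow>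
        tens C (tens C f g) h = tens C f (tens C g h)) \<and>
    (\<forall>A B f. f \<in> hom C A B \<longrightarrow>
        tens C (ident C (ounit C)) f = f \<and> tens C f (ident C (ounit C)) = f) \<and>
    (\<forall>A B. tens C (ident C A) (ident C B) = ident C (otens C A B)) \<and>
    (\<forall>A B D A' B' D' f g f' g'. f \<in> hom C A B \<longrightarrow> g \<in> hom C B D \<longrightarrow>
        f' \<in> hom C A' B' \<longrightarrow> g' \<in> hom C B' D' \<longrightarrow>
        tens C (comp C g f) (comp C g' f') = comp C (tens C g g') (tens C f f')) \<and>
    \<comment> \<open>tensor product is bilinear\<close>
    (\<forall>A B A' B' f f' g. f \<in> hom C A B \<longrightarrow> f' \<in> hom C A B \<longrightarrow> g \<in> hom C A' B' \<longrightarrow>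
        tens C (madd C f f') g = madd C (tens C f g) (tens C f' g) \<and>
        tens C g (madd C f f') = madd C (tens C g f) (tens C g f')) \<and>
    (\<forall>A B A' B' f g a. f \<in> hom C A B \<longrightarrow> g \<in> hom C A' B' \<longrightarrow>
        tens C (smul C a f) g = smul C a (tens C f g) \<and> tens C f (smul C a g) = smul C a (tens C f g))"

definition msub :: "('o,'m,'k::comm_ring_1) slmcat \<Rightarrow> 'm \<Rightarrow> 'm \<Rightarrow> 'm" where
  "msub C f g = madd C f (smul C (-1) g)"

primrec mpow :: "('o,'m,'k) slmcat \<Rightarrow> 'o \<Rightarrow> 'm \<Rightarrow> nat \<Rightarrow> 'm" where
  "mpow C A f 0 = ident C A"
| "mpow C A f (Suc n) = comp C f (mpow C A f n)"

primrec msum :: "('o,'m,'k) slmcat \<Rightarrow> 'o \<Rightarrow> 'o \<Rightarrow> (nat \<Rightarrow> 'm) \<Rightarrow> nat \<Rightarrow> 'm" where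
  "msum C A B g 0 = mzero C A B"
| "msum C A B g (Suc n) = madd C (msum C A B g n) (g n)"

definition heis_t :: "('o,'m,'k) slmcat \<Rightarrow> 'o \<Rightarrow> 'o \<Rightarrow> 'm \<Rightarrow> 'm \<Rightarrow> 'm \<Rightarrow> 'm" where
  "heis_t C up dn s c d =
     comp C (tens C (ident C dn) (tens C (ident C up) d))
       (comp C (tens C (ident C dn) (tens C s (ident C dn)))
          (tens C c (tens C (ident C up) (ident C dn))))"

text \<open>The data (up, dn, x, s, c, d, tau, e, f) satisfies the defining relations of Heis_k
  (level lev) in C; e is used when lev >= 0, f when lev < 0.\<close>
definition heis_rels ::
  "('o,'m,'k::comm_ring_1) slmcat \<Rightarrow> int \<Rightarrow> 'o \<Rightarrow> 'o \<Rightarrow> 'm \<Rightarrow> 'm \<Rightarrow> 'm \<Rightarrow> 'm \<Rightarrow> 'm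
     \<Rightarrow> (nat \<Rightarrow> 'm) \<Rightarrow> (nat \<Rightarrow> 'm) \<Rightarrow> bool" where
  "heis_rels C lev up dn x s c d tau e f \<longleftrightarrow>
    (let U = ounit C; I = ident C; uu = otens C up up; ud = otens C up dn; du = otens C dn up;
         t = heis_t C up dn s c d in
     \<comment> \<open>typing of generators\<close>
     x \<in> hom C up up \<and> s \<in> hom C uu uu \<and> c \<in> hom C U du \<and> d \<in> hom C ud U \<and>
     tau \<in> hom C du ud \<and>
     (lev \<ge> 0 \<longrightarrow> (\<forall>r < nat lev. e r \<in> hom C U ud)) \<and>
     (lev < 0 \<longrightarrow> (\<forall>r < nat (- lev). f r \<in> hom C du U)) \<and>
     \<comment> \<open>(H)\<close>
     comp C s s = I uu \<and>
     comp C (tens C s (I up)) (comp C (tens C (I up) s) (tens C s (I up))) =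
       comp C (tens C (I up) s) (comp C (tens C s (I up)) (tens C (I up) s)) \<and>
     msub C (comp C (tens C x (I up)) s) (comp C s (tens C (I up) x)) = I uu \<and>
     \<comment> \<open>(A)\<close>
     comp C (tens C d (I up)) (tens C (I up) c) = I up \<and>
     comp C (tens C (I dn) d) (tens C c (I dn)) = I dn \<and>
     \<comment> \<open>(I), k >= 0: (t, d(x^r ox 1)) has two-sided inverse (tau, e_r)\<close>
     (lev \<ge> 0 \<longrightarrow>
       (let K = nat lev; dx = (\<lambda>r. comp C d (tens C (mpow C up x r) (I dn))) in
        madd C (comp C tau t) (msum C ud ud (\<lambda>r. comp C (e r) (dx r)) K) = I ud \<and>
        comp C t tau = I du \<and>
        (\<forall>r < K. comp C t (e r) = mzero C U du) \<and>
        (\<forall>r < K. comp C (dx r) tau = mzero C du U) \<and>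
        (\<forall>r < K. \<forall>q < K. comp C (dx r) (e q) = (if r = q then I U else mzero C U U)))) \<and>
     \<comment> \<open>(I), k < 0: (t, (1 ox x^r)c) has two-sided inverse (tau, f_r)\<close>
     (lev < 0 \<longrightarrow>
       (let K = nat (- lev); cx = (\<lambda>r. comp C (tens C (I dn) (mpow C up x r)) c) in
        madd C (comp C t tau) (msum C du du (\<lambda>r. comp C (cx r) (f r)) K) = I du \<and>
        comp C tau t = I ud \<and>
        (\<forall>r < K. comp C tau (cx r) = mzero C U ud) \<and>
        (\<forall>r < K. comp C (f r) t = mzero C ud U) \<and>
        (\<forall>r < K. \<forall>q < K. comp C (f r) (cx q) = (if r = q then I U else mzero C U U)))))"

definition heis_c' :: "('o,'m,'k::comm_ring_1) slmcat \<Rightarrow> int \<Rightarrow> 'o \<Rightarrow> 'o \<Rightarrow> 'm \<Rightarrow> 'm \<Rightarrow> 'm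
     \<Rightarrow> (nat \<Rightarrow> 'm) \<Rightarrow> 'm" where
  "heis_c' C lev up dn x c tau e =
     (if lev > 0 then smul C (-1) (e (nat lev - 1))
      else comp C tau (comp C (tens C (ident C dn) (mpow C up x (nat (- lev)))) c))"

definition heis_d' :: "('o,'m,'k) slmcat \<Rightarrow> int \<Rightarrow> 'o \<Rightarrow> 'o \<Rightarrow> 'm \<Rightarrow> 'm \<Rightarrow> 'm
     \<Rightarrow> (nat \<Rightarrow> 'm) \<Rightarrow> 'm" where
  "heis_d' C lev up dn x d tau f =
     (if lev \<ge> 0 then comp C d (comp C (tens C (mpow C up x (nat lev)) (ident C dn)) tau)
      else f (nat (- lev) - 1))"

definition heis_x' :: "('o,'m,'k) slmcat \<Rightarrow> 'o \<Rightarrow> 'm \<Rightarrow> 'm \<Rightarrow> 'm \<Rightarrow> 'm" where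
  "heis_x' C dn x c d =
     comp C (tens C (ident C dn) d)
       (comp C (tens C (ident C dn) (tens C x (ident C dn))) (tens C c (ident C dn)))"

end

theory Submission
  imports Defs
begin

(* Call a pair (Phi, Psi) of endomorphisms of up-down and down-up a dot pair if it behaves like
   a dot on the upward strand: t Phi = Psi t - c d, and Phi, Psi raise the power of x in the caps
   d (x^r ox 1) and the cups (1 ox x^r) c.  Both (x ox 1, 1 ox x) and (1 ox x', x' ox 1) are dot
   pairs, the first by the dot-crossing relation (H), the second because x' slides through caps and
   cups by the zigzag relation (A).  For any dot pair, inserting the identity supplied by the
   inverse of t in (I) expresses Phi tau as tau Psi plus a sum of which only one term survives,
   namely -c' d'.  The same insertion writes d' Psi and Phi c' in terms not involving the pair,
   so these agree for the two dot pairs. *)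

section \<open>Arrows of a strict linear monoidal category\<close>

locale slm_category =
  fixes C :: "('o,'m,'k::comm_ring_1) slmcat"
  assumes slm_cat: "slm_cat C"
begin

abbreviation comp_mor (infixr "\<cdot>" 55) where "g \<cdot> f \<equiv> comp C g f"
abbreviation tens_mor (infixr "\<otimes>" 65) where "f \<otimes> g \<equiv> tens C f g"
abbreviation tens_obj (infixr "\<odot>" 70) where "A \<odot> B \<equiv> otens C A B"
abbreviation I where "I A \<equiv> ident C A"
abbreviation U where "U \<equiv> ounit C"
abbreviation add_mor (infixl "\<boxplus>" 52) where "f \<boxplus> g \<equiv> madd C f g"
abbreviation mneg where "mneg f \<equiv> smul C (-1) f"
abbreviation Z where "Z A B \<equiv> mzero C A B"

lemma hom_unique: "f \<in> hom C A B \<Longrightarrow> f \<in> hom C A' B' \<Longrightarrow> A = A' \<and> B = B'"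
  using slm_cat unfolding slm_cat_def by (elim conjE) blast

lemma
  shows ident_in_hom: "I A \<in> hom C A A"
    and comp_in_hom: "f \<in> hom C A B \<Longrightarrow> g \<in> hom C B D \<Longrightarrow> g \<cdot> f \<in> hom C A D"
    and zero_in_hom: "Z A B \<in> hom C A B"
    and add_in_hom: "f \<in> hom C A B \<Longrightarrow> g \<in> hom C A B \<Longrightarrow> f \<boxplus> g \<in> hom C A B"
    and smul_in_hom: "f \<in> hom C A B \<Longrightarrow> smul C a f \<in> hom C A B"
    and tens_in_hom: "f \<in> hom C A B \<Longrightarrow> g \<in> hom C A' B' \<Longrightarrow> f \<otimes> g \<in> hom C (A \<odot> A') (B \<odot> B')"
    and comp_assoc_in_hom: "f \<in> hom C A B \<Longrightarrow> g \<in> hom C B D \<Longrightarrow> h \<in> hom C D E \<Longrightarrow>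
      (h \<cdot> g) \<cdot> f = h \<cdot> (g \<cdot> f)"
    and comp_ident_in_hom: "f \<in> hom C A B \<Longrightarrow> I B \<cdot> f = f \<and> f \<cdot> I A = f"
    and add_assoc_in_hom: "f \<in> hom C A B \<Longrightarrow> g \<in> hom C A B \<Longrightarrow> h \<in> hom C A B \<Longrightarrow>
      (f \<boxplus> g) \<boxplus> h = f \<boxplus> (g \<boxplus> h)"
    and add_comm_in_hom: "f \<in> hom C A B \<Longrightarrow> g \<in> hom C A B \<Longrightarrow> f \<boxplus> g = g \<boxplus> f"
    and add_zero_in_hom: "f \<in> hom C A B \<Longrightarrow> f \<boxplus> Z A B = f"
    and add_mneg_in_hom: "f \<in> hom C A B \<Longrightarrow> f \<boxplus> mneg f = Z A B"
    and smul_add_in_hom: "f \<in> hom C A B \<Longrightarrow> g \<in> hom C A B \<Longrightarrow>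
      smul C a (f \<boxplus> g) = smul C a f \<boxplus> smul C a g"
    and add_smul_in_hom: "f \<in> hom C A B \<Longrightarrow> smul C (a + b) f = smul C a f \<boxplus> smul C b f"
    and smul_smul_in_hom: "f \<in> hom C A B \<Longrightarrow> smul C (a * b) f = smul C a (smul C b f)"
    and smul_one_in_hom: "f \<in> hom C A B \<Longrightarrow> smul C 1 f = f"
    and comp_add_left_in_hom: "f \<in> hom C A B \<Longrightarrow> g \<in> hom C B D \<Longrightarrow> g' \<in> hom C B D \<Longrightarrow>
      (g \<boxplus> g') \<cdot> f = g \<cdot> f \<boxplus> g' \<cdot> f"
    and comp_add_right_in_hom: "f \<in> hom C A B \<Longrightarrow> f' \<in> hom C A B \<Longrightarrow> g \<in> hom C B D \<Longrightarrow>
      g \<cdot> (f \<boxplus> f') = g \<cdot> f \<boxplus> g \<cdot> f'"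
    and comp_smul_in_hom: "f \<in> hom C A B \<Longrightarrow> g \<in> hom C B D \<Longrightarrow>
      smul C a g \<cdot> f = smul C a (g \<cdot> f) \<and> g \<cdot> smul C a f = smul C a (g \<cdot> f)"
    and tens_obj_assoc: "(A \<odot> B) \<odot> D = A \<odot> (B \<odot> D)"
    and tens_obj_unit: "U \<odot> A = A" "A \<odot> U = A"
    and tens_assoc_in_hom: "f \<in> hom C A B \<Longrightarrow> g \<in> hom C A' B' \<Longrightarrow> h \<in> hom C A'' B'' \<Longrightarrow>
      (f \<otimes> g) \<otimes> h = f \<otimes> (g \<otimes> h)"
    and tens_unit_in_hom: "f \<in> hom C A B \<Longrightarrow> I U \<otimes> f = f \<and> f \<otimes> I U = f"
    and tens_ident: "I A \<otimes> I B = I (A \<odot> B)"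
    and interchange_in_hom: "f \<in> hom C A B \<Longrightarrow> g \<in> hom C B D \<Longrightarrow>
      f' \<in> hom C A' B' \<Longrightarrow> g' \<in> hom C B' D' \<Longrightarrow> (g \<cdot> f) \<otimes> (g' \<cdot> f') = (g \<otimes> g') \<cdot> (f \<otimes> f')"
    and tens_add_in_hom: "f \<in> hom C A B \<Longrightarrow> f' \<in> hom C A B \<Longrightarrow> g \<in> hom C A' B' \<Longrightarrow>
      (f \<boxplus> f') \<otimes> g = f \<otimes> g \<boxplus> f' \<otimes> g \<and> g \<otimes> (f \<boxplus> f') = g \<otimes> f \<boxplus> g \<otimes> f'"
    and tens_smul_in_hom: "f \<in> hom C A B \<Longrightarrow> g \<in> hom C A' B' \<Longrightarrow>
      smul C a f \<otimes> g = smul C a (f \<otimes> g) \<and> f \<otimes> smul C a g = smul C a (f \<otimes> g)"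
  by (simp_all add: slm_cat[unfolded slm_cat_def])

definition arr :: "'m \<Rightarrow> bool" where "arr f \<longleftrightarrow> (\<exists>A B. f \<in> hom C A B)"
definition dom :: "'m \<Rightarrow> 'o" where "dom f = (THE A. \<exists>B. f \<in> hom C A B)"
definition cod :: "'m \<Rightarrow> 'o" where "cod f = (THE B. \<exists>A. f \<in> hom C A B)"

lemma in_homD: assumes "f \<in> hom C A B" shows "arr f" "dom f = A" "cod f = B"
  using assms hom_unique unfolding arr_def dom_def cod_def by blast+

lemma arr_in_hom: "arr f \<Longrightarrow> f \<in> hom C (dom f) (cod f)"
  unfolding arr_def using in_homD by metis

lemma in_homI: "arr f \<Longrightarrow> dom f = A \<Longrightarrow> cod f = B \<Longrightarrow> f \<in> hom C A B"
  using arr_in_hom by blast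

lemma arr_ident [simp]: "arr (I A)" "dom (I A) = A" "cod (I A) = A"
  using in_homD ident_in_hom by blast+

lemma arr_zero [simp]: "arr (Z A B)" "dom (Z A B) = A" "cod (Z A B) = B"
  using in_homD zero_in_hom by blast+

lemma arr_comp [simp]:
  assumes "arr f" "arr g" "dom g = cod f"
  shows "arr (g \<cdot> f)" "dom (g \<cdot> f) = dom f" "cod (g \<cdot> f) = cod g"
proof -
  have "g \<cdot> f \<in> hom C (dom f) (cod g)"
    using assms arr_in_hom comp_in_hom by metis
  then show "arr (g \<cdot> f)" "dom (g \<cdot> f) = dom f" "cod (g \<cdot> f) = cod g" using in_homD by blast+
qed

lemma arr_tens [simp]:
  assumes "arr f" "arr g"
  shows "arr (f \<otimes> g)" "dom (f \<otimes> g) = dom f \<odot> dom g" "cod (f \<otimes> g) = cod f \<odot> cod g"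
proof -
  have "f \<otimes> g \<in> hom C (dom f \<odot> dom g) (cod f \<odot> cod g)"
    using assms arr_in_hom tens_in_hom by metis
  then show "arr (f \<otimes> g)" "dom (f \<otimes> g) = dom f \<odot> dom g" "cod (f \<otimes> g) = cod f \<odot> cod g" using in_homD by blast+
qed

lemma arr_add [simp]:
  assumes "arr f" "arr g" "dom g = dom f" "cod g = cod f"
  shows "arr (f \<boxplus> g)" "dom (f \<boxplus> g) = dom f" "cod (f \<boxplus> g) = cod f"
proof -
  have "f \<boxplus> g \<in> hom C (dom f) (cod f)"
    using assms arr_in_hom add_in_hom by metis
  then show "arr (f \<boxplus> g)" "dom (f \<boxplus> g) = dom f" "cod (f \<boxplus> g) = cod f" using in_homD by blast+
qed

lemma arr_smul [simp]:
  assumes "arr f"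
  shows "arr (smul C a f)" "dom (smul C a f) = dom f" "cod (smul C a f) = cod f"
proof -
  have "smul C a f \<in> hom C (dom f) (cod f)"
    using assms arr_in_hom smul_in_hom by metis
  then show "arr (smul C a f)" "dom (smul C a f) = dom f" "cod (smul C a f) = cod f" using in_homD by blast+
qed

lemmas [simp] = tens_obj_assoc tens_obj_unit tens_ident

lemma comp_assoc:
  "arr f \<Longrightarrow> arr g \<Longrightarrow> arr h \<Longrightarrow> dom g = cod f \<Longrightarrow> dom h = cod g \<Longrightarrow> (h \<cdot> g) \<cdot> f = h \<cdot> (g \<cdot> f)"
  using comp_assoc_in_hom arr_in_hom by metis

lemma comp_ident_left [simp]: "arr f \<Longrightarrow> B = cod f \<Longrightarrow> I B \<cdot> f = f"
  using comp_ident_in_hom arr_in_hom by metis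

lemma comp_ident_right [simp]: "arr f \<Longrightarrow> A = dom f \<Longrightarrow> f \<cdot> I A = f"
  using comp_ident_in_hom arr_in_hom by metis

lemma add_assoc:
  "arr f \<Longrightarrow> arr g \<Longrightarrow> arr h \<Longrightarrow> dom g = dom f \<Longrightarrow> cod g = cod f \<Longrightarrow>
   dom h = dom f \<Longrightarrow> cod h = cod f \<Longrightarrow> (f \<boxplus> g) \<boxplus> h = f \<boxplus> (g \<boxplus> h)"
  using add_assoc_in_hom arr_in_hom by metis

lemma add_comm: "arr f \<Longrightarrow> arr g \<Longrightarrow> dom g = dom f \<Longrightarrow> cod g = cod f \<Longrightarrow> f \<boxplus> g = g \<boxplus> f"
  using add_comm_in_hom arr_in_hom by metis

lemma add_zero [simp]: "arr f \<Longrightarrow> A = dom f \<Longrightarrow> B = cod f \<Longrightarrow> f \<boxplus> Z A B = f"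
  using add_zero_in_hom arr_in_hom by metis

lemma zero_add [simp]: "arr f \<Longrightarrow> A = dom f \<Longrightarrow> B = cod f \<Longrightarrow> Z A B \<boxplus> f = f"
  using add_zero add_comm by simp

lemma add_mneg [simp]: "arr f \<Longrightarrow> A = dom f \<Longrightarrow> B = cod f \<Longrightarrow> f \<boxplus> mneg f = Z A B"
  using add_mneg_in_hom arr_in_hom by metis

lemma smul_add:
  "arr f \<Longrightarrow> arr g \<Longrightarrow> dom g = dom f \<Longrightarrow> cod g = cod f \<Longrightarrow>
   smul C a (f \<boxplus> g) = smul C a f \<boxplus> smul C a g"
  using smul_add_in_hom arr_in_hom by metis

lemma add_smul: "arr f \<Longrightarrow> smul C (a + b) f = smul C a f \<boxplus> smul C b f"
  using add_smul_in_hom arr_in_hom by metis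

lemma smul_smul [simp]: "arr f \<Longrightarrow> smul C a (smul C b f) = smul C (a * b) f"
  using smul_smul_in_hom arr_in_hom by metis

lemma smul_one [simp]: "arr f \<Longrightarrow> smul C 1 f = f"
  using smul_one_in_hom arr_in_hom by metis

lemma comp_add_left:
  "arr f \<Longrightarrow> arr g \<Longrightarrow> arr g' \<Longrightarrow> dom g = cod f \<Longrightarrow> dom g' = cod f \<Longrightarrow> cod g' = cod g \<Longrightarrow>
   (g \<boxplus> g') \<cdot> f = g \<cdot> f \<boxplus> g' \<cdot> f"
  using comp_add_left_in_hom arr_in_hom by metis

lemma comp_add_right:
  "arr f \<Longrightarrow> arr f' \<Longrightarrow> arr g \<Longrightarrow> dom f' = dom f \<Longrightarrow> cod f' = cod f \<Longrightarrow> dom g = cod f \<Longrightarrow>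
   g \<cdot> (f \<boxplus> f') = g \<cdot> f \<boxplus> g \<cdot> f'"
  using comp_add_right_in_hom arr_in_hom by metis

lemma comp_smul [simp]:
  "arr f \<Longrightarrow> arr g \<Longrightarrow> dom g = cod f \<Longrightarrow> smul C a g \<cdot> f = smul C a (g \<cdot> f)"
  "arr f \<Longrightarrow> arr g \<Longrightarrow> dom g = cod f \<Longrightarrow> g \<cdot> smul C a f = smul C a (g \<cdot> f)"
  using comp_smul_in_hom arr_in_hom by metis+

lemma tens_assoc [simp]: "arr f \<Longrightarrow> arr g \<Longrightarrow> arr h \<Longrightarrow> (f \<otimes> g) \<otimes> h = f \<otimes> (g \<otimes> h)"
  using tens_assoc_in_hom arr_in_hom by metis

lemma tens_unit [simp]: "arr f \<Longrightarrow> I U \<otimes> f = f" "arr f \<Longrightarrow> f \<otimes> I U = f"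
  using tens_unit_in_hom arr_in_hom by metis+

lemma interchange:
  "arr f \<Longrightarrow> arr g \<Longrightarrow> arr f' \<Longrightarrow> arr g' \<Longrightarrow> dom g = cod f \<Longrightarrow> dom g' = cod f' \<Longrightarrow>
   (g \<cdot> f) \<otimes> (g' \<cdot> f') = (g \<otimes> g') \<cdot> (f \<otimes> f')"
  using interchange_in_hom arr_in_hom by metis

lemma tens_add:
  "arr f \<Longrightarrow> arr f' \<Longrightarrow> arr g \<Longrightarrow> dom f' = dom f \<Longrightarrow> cod f' = cod f \<Longrightarrow>
   (f \<boxplus> f') \<otimes> g = f \<otimes> g \<boxplus> f' \<otimes> g"
  "arr f \<Longrightarrow> arr f' \<Longrightarrow> arr g \<Longrightarrow> dom f' = dom f \<Longrightarrow> cod f' = cod f \<Longrightarrow>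
   g \<otimes> (f \<boxplus> f') = g \<otimes> f \<boxplus> g \<otimes> f'"
  using tens_add_in_hom arr_in_hom by metis+

lemma tens_smul [simp]:
  "arr f \<Longrightarrow> arr g \<Longrightarrow> smul C a f \<otimes> g = smul C a (f \<otimes> g)"
  "arr f \<Longrightarrow> arr g \<Longrightarrow> f \<otimes> smul C a g = smul C a (f \<otimes> g)"
  using tens_smul_in_hom arr_in_hom by metis+

lemma mneg_add:
  "arr f \<Longrightarrow> arr g \<Longrightarrow> dom g = dom f \<Longrightarrow> cod g = cod f \<Longrightarrow> mneg (f \<boxplus> g) = mneg f \<boxplus> mneg g"
  by (rule smul_add)

lemma idempotent_add_eq_zero:
  assumes "arr a" "a \<boxplus> a = a"
  shows "a = Z (dom a) (cod a)"
proof -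
  have "a = a \<boxplus> (a \<boxplus> mneg a)" using assms by simp
  also have "\<dots> = (a \<boxplus> a) \<boxplus> mneg a" by (rule add_assoc[symmetric]) (use assms(1) in simp_all)
  also have "\<dots> = Z (dom a) (cod a)" using assms by simp
  finally show ?thesis .
qed

lemma smul_zero [simp]: "arr f \<Longrightarrow> smul C 0 f = Z (dom f) (cod f)"
  using idempotent_add_eq_zero[of "smul C 0 f"] add_smul[of f 0 0] by simp

lemma smul_zero_mor [simp]: "smul C a (Z A B) = Z A B"
  using smul_smul[of "Z A B" a 0] by simp

lemma comp_zero_right [simp]: "arr g \<Longrightarrow> B = dom g \<Longrightarrow> g \<cdot> Z A B = Z A (cod g)"
proof -
  assume "arr g" "B = dom g"
  then have "g \<cdot> smul C 0 (Z A B) = smul C 0 (g \<cdot> Z A B)" by (subst comp_smul) simp_all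
  with \<open>arr g\<close> \<open>B = dom g\<close> show ?thesis by simp
qed

lemma comp_zero_left [simp]: "arr f \<Longrightarrow> B = cod f \<Longrightarrow> Z B D \<cdot> f = Z (dom f) D"
proof -
  assume "arr f" "B = cod f"
  then have "smul C 0 (Z B D) \<cdot> f = smul C 0 (Z B D \<cdot> f)" by (subst comp_smul) simp_all
  with \<open>arr f\<close> \<open>B = cod f\<close> show ?thesis by simp
qed

lemma tens_zero_left [simp]: "arr g \<Longrightarrow> Z A B \<otimes> g = Z (A \<odot> dom g) (B \<odot> cod g)"
proof -
  assume "arr g"
  then have "smul C 0 (Z A B) \<otimes> g = smul C 0 (Z A B \<otimes> g)" by (subst tens_smul) simp_all
  with \<open>arr g\<close> show ?thesis by simp
qed

lemma tens_zero_right [simp]: "arr g \<Longrightarrow> g \<otimes> Z A B = Z (dom g \<odot> A) (cod g \<odot> B)"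
proof -
  assume "arr g"
  then have "g \<otimes> smul C 0 (Z A B) = smul C 0 (g \<otimes> Z A B)" by (subst tens_smul) simp_all
  with \<open>arr g\<close> show ?thesis by simp
qed

lemma msub_add_mneg_cancel:
  assumes "arr a" "arr b" "dom b = dom a" "cod b = cod a"
  shows "msub C a (a \<boxplus> mneg b) = b"
proof -
  have "msub C a (a \<boxplus> mneg b) = a \<boxplus> (mneg a \<boxplus> b)"
    unfolding msub_def using assms by (subst mneg_add) simp_all
  also have "\<dots> = (a \<boxplus> mneg a) \<boxplus> b" using assms by (subst add_assoc) simp_all
  finally show ?thesis using assms by simp
qed

lemma eq_add_imp_eq_add_mneg:
  assumes "arr b" "arr e" "dom e = dom b" "cod e = cod b" "a = b \<boxplus> e"
  shows "b = a \<boxplus> mneg e"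
proof -
  have "a \<boxplus> mneg e = b \<boxplus> (e \<boxplus> mneg e)" unfolding assms(5) using assms(1-4) by (subst add_assoc) simp_all
  then show ?thesis using assms by simp
qed

lemma add_mneg_eq_imp_eq_add_mneg:
  assumes "arr p" "arr q" "dom q = dom p" "cod q = cod p" "p \<boxplus> mneg q = r"
  shows "q = p \<boxplus> mneg r"
proof -
  have "p \<boxplus> mneg r = p \<boxplus> (mneg p \<boxplus> q)" unfolding assms(5)[symmetric] using assms(1-4) by (subst mneg_add) simp_all
  also have "\<dots> = (p \<boxplus> mneg p) \<boxplus> q" using assms by (subst add_assoc) simp_all
  finally show ?thesis using assms by simp
qed

definition whisker :: "'o \<Rightarrow> 'm \<Rightarrow> 'o \<Rightarrow> 'm" where
  "whisker A g B = I A \<otimes> (g \<otimes> I B)"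

lemma arr_whisker [simp]:
  "arr g \<Longrightarrow> arr (whisker A g B)"
  "arr g \<Longrightarrow> dom (whisker A g B) = A \<odot> dom g \<odot> B"
  "arr g \<Longrightarrow> cod (whisker A g B) = A \<odot> cod g \<odot> B"
  by (simp_all add: whisker_def)

lemma whisker_comp:
  "arr g \<Longrightarrow> arr h \<Longrightarrow> dom g = cod h \<Longrightarrow> whisker A g B \<cdot> whisker A h B = whisker A (g \<cdot> h) B"
  unfolding whisker_def by (simp add: interchange[symmetric])

lemma whisker_comp_eq:
  "g \<cdot> h = g' \<cdot> h' \<Longrightarrow> arr g \<Longrightarrow> arr h \<Longrightarrow> dom g = cod h \<Longrightarrow> arr g' \<Longrightarrow> arr h' \<Longrightarrow>
   dom g' = cod h' \<Longrightarrow> whisker A g B \<cdot> whisker A h B = whisker A g' B \<cdot> whisker A h' B"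
  by (simp add: whisker_comp)

lemma whisker_add:
  "arr g \<Longrightarrow> arr h \<Longrightarrow> dom h = dom g \<Longrightarrow> cod h = cod g \<Longrightarrow>
   whisker A (g \<boxplus> h) B = whisker A g B \<boxplus> whisker A h B"
  by (simp add: whisker_def tens_add)

lemma tens_ident_tens [simp]: "arr h \<Longrightarrow> I A \<otimes> (I B \<otimes> h) = I (A \<odot> B) \<otimes> h"
  using tens_assoc[of "I A" "I B" h] by simp

text \<open>Tensor products with identities are normalised to single whiskers \<open>1\<^sub>A \<otimes> g \<otimes> 1\<^sub>B\<close>.\<close>

lemma whisker_simps [simp]:
  "arr g \<Longrightarrow> g \<otimes> I B = whisker U g B"
  "arr g \<Longrightarrow> I A \<otimes> g = whisker A g U"
  "arr g \<Longrightarrow> whisker A g B \<otimes> I D = whisker A g (B \<odot> D)"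
  "arr g \<Longrightarrow> I D \<otimes> whisker A g B = whisker (D \<odot> A) g B"
  "arr g \<Longrightarrow> whisker U g U = g"
  "whisker A (I P) B = I (A \<odot> P \<odot> B)"
  "arr g \<Longrightarrow> whisker A (whisker A' g B') B = whisker (A \<odot> A') g (B' \<odot> B)"
  "whisker A (Z P Q) B = Z (A \<odot> P \<odot> B) (A \<odot> Q \<odot> B)"
  "arr g \<Longrightarrow> whisker A (smul C a g) B = smul C a (whisker A g B)"
  by (simp_all add: whisker_def)

text \<open>Both sides are \<open>1\<^sub>A \<otimes> g \<otimes> 1\<^sub>M \<otimes> h \<otimes> 1\<^sub>B\<close>.\<close>

lemma whisker_interchange:
  assumes "arr g" "arr h"
  shows "whisker (A \<odot> cod g \<odot> M) h B \<cdot> whisker A g (M \<odot> dom h \<odot> B)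
       = whisker A g (M \<odot> cod h \<odot> B) \<cdot> whisker (A \<odot> dom g \<odot> M) h B"
proof -
  have "g \<otimes> whisker M h U = (g \<cdot> I (dom g)) \<otimes> (I (cod (whisker M h U)) \<cdot> whisker M h U)"
    using assms by simp
  also have "\<dots> = whisker U g (M \<odot> cod h) \<cdot> whisker (dom g \<odot> M) h U"
    using assms by (subst interchange) simp_all
  finally have left: "whisker A (g \<otimes> whisker M h U) B
      = whisker A g (M \<odot> cod h \<odot> B) \<cdot> whisker (A \<odot> dom g \<odot> M) h B"
    using assms by (simp add: whisker_comp[symmetric])
  have "g \<otimes> whisker M h U = (I (cod g) \<cdot> g) \<otimes> (whisker M h U \<cdot> I (dom (whisker M h U)))"
    using assms by simp
  also have "\<dots> = whisker (cod g \<odot> M) h U \<cdot> whisker U g (M \<odot> dom h)"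
    using assms by (subst interchange) simp_all
  finally have "whisker A (g \<otimes> whisker M h U) B
      = whisker (A \<odot> cod g \<odot> M) h B \<cdot> whisker A g (M \<odot> dom h \<odot> B)"
    using assms by (simp add: whisker_comp[symmetric])
  with left show ?thesis by simp
qed

lemma comp_eq_comp_precomp:
  "a \<cdot> b = c \<cdot> e \<Longrightarrow> arr a \<Longrightarrow> arr b \<Longrightarrow> arr c \<Longrightarrow> arr e \<Longrightarrow> arr r \<Longrightarrow>
   dom a = cod b \<Longrightarrow> dom c = cod e \<Longrightarrow> dom b = cod r \<Longrightarrow> dom e = cod r \<Longrightarrow> a \<cdot> (b \<cdot> r) = c \<cdot> (e \<cdot> r)"
  by (metis comp_assoc)

lemma comp_eq_precomp:
  "a \<cdot> b = h \<Longrightarrow> arr a \<Longrightarrow> arr b \<Longrightarrow> arr r \<Longrightarrow>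
   dom a = cod b \<Longrightarrow> dom b = cod r \<Longrightarrow> a \<cdot> (b \<cdot> r) = h \<cdot> r"
  by (metis comp_assoc)

lemma arr_msum:
  assumes "\<forall>r<n. arr (g r) \<and> dom (g r) = A \<and> cod (g r) = B"
  shows "arr (msum C A B g n) \<and> dom (msum C A B g n) = A \<and> cod (msum C A B g n) = B"
  using assms by (induction n) auto

lemma msum_comp_right:
  assumes "\<forall>r<n. arr (g r) \<and> dom (g r) = A \<and> cod (g r) = B" "arr h" "cod h = A"
  shows "msum C A B g n \<cdot> h = msum C (dom h) B (\<lambda>r. g r \<cdot> h) n"
  using assms
proof (induction n)
  case (Suc n)
  then show ?case using arr_msum[of n g A B] by (simp add: comp_add_left)
qed simp

lemma msum_comp_left:
  assumes "\<forall>r<n. arr (g r) \<and> dom (g r) = A \<and> cod (g r) = B" "arr h" "dom h = B"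
  shows "h \<cdot> msum C A B g n = msum C A (cod h) (\<lambda>r. h \<cdot> g r) n"
  using assms
proof (induction n)
  case (Suc n)
  then show ?case using arr_msum[of n g A B] by (simp add: comp_add_right)
qed simp

lemma msum_cong: "(\<forall>r<n. g r = g' r) \<Longrightarrow> msum C A B g n = msum C A B g' n"
  by (induction n) auto

lemma msum_zero: "(\<forall>r<n. g r = Z A B) \<Longrightarrow> msum C A B g n = Z A B"
  by (induction n) auto

lemma msum_eq_last:
  assumes "0 < n" "\<forall>r<n - 1. g r = Z A B" "arr (g (n - 1))" "dom (g (n - 1)) = A" "cod (g (n - 1)) = B"
  shows "msum C A B g n = g (n - 1)"
proof -
  obtain m where m: "n = Suc m" using assms(1) by (cases n) auto
  have "msum C A B g m = Z A B" using assms(2) m by (intro msum_zero) simp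
  then show ?thesis using m assms by simp
qed

lemma arr_mpow [simp]:
  "arr x \<Longrightarrow> dom x = A \<Longrightarrow> cod x = A \<Longrightarrow> arr (mpow C A x r)"
  "arr x \<Longrightarrow> dom x = A \<Longrightarrow> cod x = A \<Longrightarrow> dom (mpow C A x r) = A"
  "arr x \<Longrightarrow> dom x = A \<Longrightarrow> cod x = A \<Longrightarrow> cod (mpow C A x r) = A"
  by (induction r) auto

lemma mpow_comp_commute: "arr x \<Longrightarrow> dom x = A \<Longrightarrow> cod x = A \<Longrightarrow> mpow C A x r \<cdot> x = x \<cdot> mpow C A x r"
  by (induction r) (auto simp: comp_assoc)

end

section \<open>Dot pairs in the Heisenberg category\<close>

locale heisenberg = slm_category C for C :: "('o,'m,'k::comm_ring_1) slmcat" +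
  fixes lev :: int and up dn :: 'o and x s c d tau :: 'm and e f :: "nat \<Rightarrow> 'm"
  assumes heis_rels: "heis_rels C lev up dn x s c d tau e f"
begin

abbreviation t where "t \<equiv> heis_t C up dn s c d"
abbreviation x' where "x' \<equiv> heis_x' C dn x c d"
abbreviation c' where "c' \<equiv> heis_c' C lev up dn x c tau e"
abbreviation d' where "d' \<equiv> heis_d' C lev up dn x d tau f"
abbreviation xpow where "xpow r \<equiv> mpow C up x r"
abbreviation cap_x where "cap_x r \<equiv> d \<cdot> whisker U (xpow r) dn"
abbreviation cup_x where "cup_x r \<equiv> whisker dn (xpow r) U \<cdot> c"

lemmas heis_rels_unfolded = heis_rels[unfolded heis_rels_def Let_def]

lemma generators_in_hom:
  "x \<in> hom C up up" "s \<in> hom C (up \<odot> up) (up \<odot> up)" "c \<in> hom C U (dn \<odot> up)"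
  "d \<in> hom C (up \<odot> dn) U" "tau \<in> hom C (dn \<odot> up) (up \<odot> dn)"
  using heis_rels_unfolded by blast+

lemma arr_generators [simp]:
  "arr x" "dom x = up" "cod x = up"
  "arr s" "dom s = up \<odot> up" "cod s = up \<odot> up"
  "arr c" "dom c = U" "cod c = dn \<odot> up"
  "arr d" "dom d = up \<odot> dn" "cod d = U"
  "arr tau" "dom tau = dn \<odot> up" "cod tau = up \<odot> dn"
  using generators_in_hom in_homD by blast+

lemma s_comp_s: "s \<cdot> s = I (up \<odot> up)"
  using heis_rels_unfolded by blast

lemma dot_slide: "msub C (whisker U x up \<cdot> s) (s \<cdot> whisker up x U) = I (up \<odot> up)"
  using heis_rels_unfolded by simp

lemma zigzag: "whisker U d up \<cdot> whisker up c U = I up"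
  using heis_rels_unfolded by simp

lemma t_eq: "t = whisker (dn \<odot> up) d U \<cdot> whisker dn s dn \<cdot> whisker U c (up \<odot> dn)"
  unfolding heis_t_def by simp

lemma x'_eq: "x' = whisker dn d U \<cdot> whisker dn x dn \<cdot> whisker U c dn"
  unfolding heis_x'_def by simp

lemma arr_t [simp]: "arr t" "dom t = up \<odot> dn" "cod t = dn \<odot> up"
  by (simp_all add: t_eq)

lemma arr_x' [simp]: "arr x'" "dom x' = dn" "cod x' = dn"
  by (simp_all add: x'_eq)

lemma cap_comp_x': "d \<cdot> whisker up x' U = d \<cdot> whisker U x dn"
proof -
  have x': "whisker up x' U = whisker (up \<odot> dn) d U \<cdot> (whisker (up \<odot> dn) x dn \<cdot> whisker up c dn)"
    by (simp add: x'_eq whisker_comp[symmetric])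
  have d_d: "d \<cdot> whisker (up \<odot> dn) d U = d \<cdot> whisker U d (up \<odot> dn)"
    using whisker_interchange[of d d U U U] by simp
  have d_x: "whisker U d (up \<odot> dn) \<cdot> whisker (up \<odot> dn) x dn = whisker U x dn \<cdot> whisker U d (up \<odot> dn)"
    using whisker_interchange[of d x U U dn] by simp
  have zz: "whisker U d (up \<odot> dn) \<cdot> whisker up c dn = I (up \<odot> dn)"
    using whisker_comp[of "whisker U d up" "whisker up c U" U dn] by (simp add: zigzag)
  have "d \<cdot> whisker up x' U = (d \<cdot> whisker (up \<odot> dn) d U) \<cdot> (whisker (up \<odot> dn) x dn \<cdot> whisker up c dn)"
    unfolding x' by (simp add: comp_assoc)
  also have "\<dots> = d \<cdot> (whisker U d (up \<odot> dn) \<cdot> (whisker (up \<odot> dn) x dn \<cdot> whisker up c dn))"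
    unfolding d_d by (simp add: comp_assoc)
  also have "\<dots> = d \<cdot> (whisker U x dn \<cdot> (whisker U d (up \<odot> dn) \<cdot> whisker up c dn))"
    by (simp add: d_x[THEN comp_eq_comp_precomp])
  also have "\<dots> = d \<cdot> whisker U x dn"
    by (simp add: zz)
  finally show ?thesis .
qed

lemma x'_comp_cup: "whisker U x' up \<cdot> c = whisker dn x U \<cdot> c"
proof -
  have x': "whisker U x' up = whisker dn d up \<cdot> (whisker dn x (dn \<odot> up) \<cdot> whisker U c (dn \<odot> up))"
    by (simp add: x'_eq whisker_comp[symmetric])
  have c_c: "whisker U c (dn \<odot> up) \<cdot> c = whisker (dn \<odot> up) c U \<cdot> c"
    using whisker_interchange[of c c U U U] by simp
  have x_c: "whisker dn x (dn \<odot> up) \<cdot> whisker (dn \<odot> up) c U = whisker (dn \<odot> up) c U \<cdot> whisker dn x U"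
    using whisker_interchange[of x c dn U U] by simp
  have zz: "whisker dn d up \<cdot> whisker (dn \<odot> up) c U = I (dn \<odot> up)"
    using whisker_comp[of "whisker U d up" "whisker up c U" dn U] by (simp add: zigzag)
  have "whisker U x' up \<cdot> c = whisker dn d up \<cdot> (whisker dn x (dn \<odot> up) \<cdot> (whisker U c (dn \<odot> up) \<cdot> c))"
    unfolding x' by (simp add: comp_assoc)
  also have "\<dots> = whisker dn d up \<cdot> (whisker dn x (dn \<odot> up) \<cdot> whisker (dn \<odot> up) c U \<cdot> c)"
    unfolding c_c by simp
  also have "\<dots> = whisker dn d up \<cdot> (whisker (dn \<odot> up) c U \<cdot> (whisker dn x U \<cdot> c))"
    by (simp add: x_c[THEN comp_eq_comp_precomp])
  also have "\<dots> = whisker dn x U \<cdot> c"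
    by (simp add: zz[THEN comp_eq_precomp])
  finally show ?thesis .
qed

lemma s_comp_dot_right: "s \<cdot> whisker up x U = whisker U x up \<cdot> s \<boxplus> mneg (I (up \<odot> up))"
  using dot_slide by (intro add_mneg_eq_imp_eq_add_mneg) (simp_all add: msub_def)

lemma dot_right_comp_s: "whisker up x U \<cdot> s = s \<cdot> whisker U x up \<boxplus> mneg (I (up \<odot> up))"
proof -
  have "s \<cdot> ((whisker U x up \<cdot> s \<boxplus> mneg (s \<cdot> whisker up x U)) \<cdot> s) = s \<cdot> (I (up \<odot> up) \<cdot> s)"
    using dot_slide by (simp add: msub_def)
  then have "s \<cdot> whisker U x up \<boxplus> mneg (whisker up x U \<cdot> s) = I (up \<odot> up)"
    by (simp add: comp_add_left comp_add_right comp_assoc s_comp_s s_comp_s[THEN comp_eq_precomp])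
  then show ?thesis by (intro add_mneg_eq_imp_eq_add_mneg) simp_all
qed

lemma t_comp_x: "t \<cdot> whisker U x dn = whisker dn x U \<cdot> t \<boxplus> mneg (c \<cdot> d)"
proof -
  have c_x: "whisker U c (up \<odot> dn) \<cdot> whisker U x dn = whisker (dn \<odot> up) x dn \<cdot> whisker U c (up \<odot> dn)"
    using whisker_interchange[of c x U U dn] by simp
  have "whisker dn s dn \<cdot> whisker (dn \<odot> up) x dn = whisker dn (s \<cdot> whisker up x U) dn"
    by (simp add: whisker_comp[symmetric])
  also have "\<dots> = whisker dn x (up \<odot> dn) \<cdot> whisker dn s dn \<boxplus> mneg (I (dn \<odot> up \<odot> up \<odot> dn))"
    by (simp add: s_comp_dot_right whisker_add whisker_comp[symmetric])
  finally have s_x: "whisker dn s dn \<cdot> whisker (dn \<odot> up) x dn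
      = whisker dn x (up \<odot> dn) \<cdot> whisker dn s dn \<boxplus> mneg (I (dn \<odot> up \<odot> up \<odot> dn))" .
  have d_x: "whisker (dn \<odot> up) d U \<cdot> whisker dn x (up \<odot> dn) = whisker dn x U \<cdot> whisker (dn \<odot> up) d U"
    using whisker_interchange[of x d dn U U] by simp
  have d_c: "whisker (dn \<odot> up) d U \<cdot> whisker U c (up \<odot> dn) = c \<cdot> d"
    using whisker_interchange[of c d U U U] by simp
  have "t \<cdot> whisker U x dn
      = whisker (dn \<odot> up) d U \<cdot> ((whisker dn s dn \<cdot> whisker (dn \<odot> up) x dn) \<cdot> whisker U c (up \<odot> dn))"
    by (simp add: t_eq comp_assoc c_x)
  also have "\<dots> = whisker (dn \<odot> up) d U \<cdot> whisker dn x (up \<odot> dn) \<cdot> whisker dn s dn \<cdot> whisker U c (up \<odot> dn)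
      \<boxplus> mneg (whisker (dn \<odot> up) d U \<cdot> whisker U c (up \<odot> dn))"
    by (simp add: s_x comp_add_left comp_add_right comp_assoc)
  also have "\<dots> = whisker dn x U \<cdot> t \<boxplus> mneg (c \<cdot> d)"
    by (simp add: d_x[THEN comp_eq_comp_precomp] d_c t_eq)
  finally show ?thesis .
qed

lemma t_comp_x': "t \<cdot> whisker up x' U = whisker U x' up \<cdot> t \<boxplus> mneg (c \<cdot> d)"
proof -
  have c_x': "whisker U c (up \<odot> dn) \<cdot> whisker up x' U = whisker (dn \<odot> up \<odot> up) x' U \<cdot> whisker U c (up \<odot> dn)"
    using whisker_interchange[of c x' U up U] by simp
  have s_x': "whisker dn s dn \<cdot> whisker (dn \<odot> up \<odot> up) x' U = whisker (dn \<odot> up \<odot> up) x' U \<cdot> whisker dn s dn"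
    using whisker_interchange[of s x' dn U U] by simp
  have d_x': "whisker (dn \<odot> up) d U \<cdot> whisker (dn \<odot> up \<odot> up) x' U
      = whisker (dn \<odot> up) d U \<cdot> whisker (dn \<odot> up) x dn"
    using whisker_comp_eq[OF cap_comp_x', of "dn \<odot> up" U] by simp
  have "whisker (dn \<odot> up) x dn \<cdot> whisker dn s dn = whisker dn (whisker up x U \<cdot> s) dn"
    by (simp add: whisker_comp[symmetric])
  also have "\<dots> = whisker dn s dn \<cdot> whisker dn x (up \<odot> dn) \<boxplus> mneg (I (dn \<odot> up \<odot> up \<odot> dn))"
    by (simp add: dot_right_comp_s whisker_add whisker_comp[symmetric])
  finally have x_s: "whisker (dn \<odot> up) x dn \<cdot> whisker dn s dn
      = whisker dn s dn \<cdot> whisker dn x (up \<odot> dn) \<boxplus> mneg (I (dn \<odot> up \<odot> up \<odot> dn))" .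
  have x_c: "whisker dn x (up \<odot> dn) \<cdot> whisker U c (up \<odot> dn)
      = whisker U x' (up \<odot> up \<odot> dn) \<cdot> whisker U c (up \<odot> dn)"
    using whisker_comp_eq[OF x'_comp_cup[symmetric], of U "up \<odot> dn"] by simp
  have s_x'': "whisker dn s dn \<cdot> whisker U x' (up \<odot> up \<odot> dn) = whisker U x' (up \<odot> up \<odot> dn) \<cdot> whisker dn s dn"
    using whisker_interchange[of x' s U U dn] by simp
  have d_x'': "whisker (dn \<odot> up) d U \<cdot> whisker U x' (up \<odot> up \<odot> dn) = whisker U x' up \<cdot> whisker (dn \<odot> up) d U"
    using whisker_interchange[of x' d U up U] by simp
  have d_c: "whisker (dn \<odot> up) d U \<cdot> whisker U c (up \<odot> dn) = c \<cdot> d"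
    using whisker_interchange[of c d U U U] by simp
  have "t \<cdot> whisker up x' U
      = (whisker (dn \<odot> up) d U \<cdot> whisker (dn \<odot> up \<odot> up) x' U) \<cdot> (whisker dn s dn \<cdot> whisker U c (up \<odot> dn))"
    by (simp add: t_eq comp_assoc c_x' s_x'[THEN comp_eq_comp_precomp])
  also have "\<dots> = whisker (dn \<odot> up) d U \<cdot> ((whisker (dn \<odot> up) x dn \<cdot> whisker dn s dn) \<cdot> whisker U c (up \<odot> dn))"
    by (simp add: d_x' comp_assoc)
  also have "\<dots> = whisker (dn \<odot> up) d U \<cdot> whisker dn s dn \<cdot> whisker dn x (up \<odot> dn) \<cdot> whisker U c (up \<odot> dn)
      \<boxplus> mneg (whisker (dn \<odot> up) d U \<cdot> whisker U c (up \<odot> dn))"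
    by (simp add: x_s comp_add_left comp_add_right comp_assoc)
  also have "\<dots> = whisker U x' up \<cdot> t \<boxplus> mneg (c \<cdot> d)"
    by (simp add: x_c d_c s_x''[THEN comp_eq_comp_precomp] d_x''[THEN comp_eq_comp_precomp] t_eq)
  finally show ?thesis .
qed

declare mpow.simps(2) [simp del]

lemma arr_xpow [simp]: "arr (xpow r)" "dom (xpow r) = up" "cod (xpow r) = up"
  by simp_all

lemma whisker_xpow_comp_x:
  "whisker A (xpow r) B \<cdot> whisker A x B = whisker A (xpow (Suc r)) B"
  "whisker A x B \<cdot> whisker A (xpow r) B = whisker A (xpow (Suc r)) B"
  by (simp_all add: whisker_comp mpow_comp_commute mpow.simps(2))

lemma cap_x_comp_x: "cap_x r \<cdot> whisker U x dn = cap_x (Suc r)"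
  by (simp add: comp_assoc whisker_xpow_comp_x)

lemma cap_x_comp_x': "cap_x r \<cdot> whisker up x' U = cap_x (Suc r)"
proof -
  have "whisker U (xpow r) dn \<cdot> whisker up x' U = whisker up x' U \<cdot> whisker U (xpow r) dn"
    using whisker_interchange[of "xpow r" x' U U U] by simp
  then have "cap_x r \<cdot> whisker up x' U = (d \<cdot> whisker up x' U) \<cdot> whisker U (xpow r) dn"
    by (simp add: comp_assoc)
  then show ?thesis by (simp add: cap_comp_x' comp_assoc whisker_xpow_comp_x)
qed

lemma x_comp_cup_x: "whisker dn x U \<cdot> cup_x r = cup_x (Suc r)"
  by (simp add: comp_assoc[symmetric] whisker_xpow_comp_x)

lemma x'_comp_cup_x: "whisker U x' up \<cdot> cup_x r = cup_x (Suc r)"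
proof -
  have "whisker U x' up \<cdot> whisker dn (xpow r) U = whisker dn (xpow r) U \<cdot> whisker U x' up"
    using whisker_interchange[of x' "xpow r" U U U] by simp
  then have "whisker U x' up \<cdot> cup_x r = whisker dn (xpow r) U \<cdot> (whisker U x' up \<cdot> c)"
    by (simp add: comp_assoc[symmetric])
  then show ?thesis by (simp add: x'_comp_cup comp_assoc[symmetric] whisker_xpow_comp_x)
qed

lemma inverse_nonneg:
  assumes "0 \<le> lev"
  shows "tau \<cdot> t \<boxplus> msum C (up \<odot> dn) (up \<odot> dn) (\<lambda>r. e r \<cdot> cap_x r) (nat lev) = I (up \<odot> dn)"
    and "t \<cdot> tau = I (dn \<odot> up)"
    and "r < nat lev \<Longrightarrow> t \<cdot> e r = Z U (dn \<odot> up)"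
    and "r < nat lev \<Longrightarrow> cap_x r \<cdot> tau = Z (dn \<odot> up) U"
  using heis_rels_unfolded assms by simp_all

lemma arr_e:
  assumes "0 \<le> lev" "r < nat lev"
  shows "arr (e r) \<and> dom (e r) = U \<and> cod (e r) = up \<odot> dn"
proof -
  have "e r \<in> hom C U (up \<odot> dn)" using heis_rels_unfolded assms by blast
  then show ?thesis using in_homD by blast
qed

lemma inverse_neg:
  assumes "lev < 0"
  shows "t \<cdot> tau \<boxplus> msum C (dn \<odot> up) (dn \<odot> up) (\<lambda>r. cup_x r \<cdot> f r) (nat (- lev)) = I (dn \<odot> up)"
    and "tau \<cdot> t = I (up \<odot> dn)"
    and "r < nat (- lev) \<Longrightarrow> tau \<cdot> cup_x r = Z U (up \<odot> dn)"
    and "r < nat (- lev) \<Longrightarrow> f r \<cdot> t = Z (up \<odot> dn) U"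
  using heis_rels_unfolded assms by simp_all

lemma arr_f:
  assumes "lev < 0" "r < nat (- lev)"
  shows "arr (f r) \<and> dom (f r) = dn \<odot> up \<and> cod (f r) = U"
proof -
  have "f r \<in> hom C (dn \<odot> up) U" using heis_rels_unfolded assms by blast
  then show ?thesis using in_homD by blast
qed

lemma c'_pos: "0 < lev \<Longrightarrow> c' = mneg (e (nat lev - 1))"
  by (simp add: heis_c'_def)

lemma c'_nonpos: "lev \<le> 0 \<Longrightarrow> c' = tau \<cdot> cup_x (nat (- lev))"
  by (simp add: heis_c'_def)

lemma d'_nonneg: "0 \<le> lev \<Longrightarrow> d' = cap_x (nat lev) \<cdot> tau"
  by (simp add: heis_d'_def comp_assoc)

lemma d'_neg: "lev < 0 \<Longrightarrow> d' = f (nat (- lev) - 1)"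
  by (simp add: heis_d'_def)

lemma arr_c' [simp]: "arr c'" "dom c' = U" "cod c' = up \<odot> dn"
proof -
  have "arr c' \<and> dom c' = U \<and> cod c' = up \<odot> dn"
  proof (cases "0 < lev")
    case True
    then show ?thesis using arr_e[of "nat lev - 1"] by (simp add: c'_pos)
  qed (simp add: c'_nonpos)
  then show "arr c'" "dom c' = U" "cod c' = up \<odot> dn" by simp_all
qed

lemma arr_d' [simp]: "arr d'" "dom d' = dn \<odot> up" "cod d' = U"
proof -
  have "arr d' \<and> dom d' = dn \<odot> up \<and> cod d' = U"
  proof (cases "lev < 0")
    case True
    then show ?thesis using arr_f[of "nat (- lev) - 1"] by (simp add: d'_neg)
  qed (simp add: d'_nonneg)
  then show "arr d'" "dom d' = dn \<odot> up" "cod d' = U" by simp_all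
qed

lemma identity_expansion_nonneg:
  assumes "0 \<le> lev" "arr g" "cod g = up \<odot> dn"
  shows "g = tau \<cdot> (t \<cdot> g) \<boxplus> msum C (dom g) (up \<odot> dn) (\<lambda>r. e r \<cdot> (cap_x r \<cdot> g)) (nat lev)"
proof -
  let ?S = "msum C (up \<odot> dn) (up \<odot> dn) (\<lambda>r. e r \<cdot> cap_x r) (nat lev)"
  have terms: "\<forall>r<nat lev. arr (e r \<cdot> cap_x r) \<and> dom (e r \<cdot> cap_x r) = up \<odot> dn \<and> cod (e r \<cdot> cap_x r) = up \<odot> dn"
    using arr_e assms(1) by simp
  have "g = (tau \<cdot> t \<boxplus> ?S) \<cdot> g"
    using inverse_nonneg(1) assms by simp
  also have "\<dots> = tau \<cdot> (t \<cdot> g) \<boxplus> ?S \<cdot> g"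
    using assms arr_msum[OF terms] by (simp add: comp_add_left comp_assoc)
  also have "?S \<cdot> g = msum C (dom g) (up \<odot> dn) (\<lambda>r. e r \<cdot> (cap_x r \<cdot> g)) (nat lev)"
    using terms assms arr_e by (simp add: msum_comp_right msum_cong comp_assoc)
  finally show ?thesis .
qed

lemma identity_expansion_neg:
  assumes "lev < 0" "arr g" "dom g = dn \<odot> up"
  shows "g = (g \<cdot> t) \<cdot> tau \<boxplus> msum C (dn \<odot> up) (cod g) (\<lambda>r. (g \<cdot> cup_x r) \<cdot> f r) (nat (- lev))"
proof -
  let ?S = "msum C (dn \<odot> up) (dn \<odot> up) (\<lambda>r. cup_x r \<cdot> f r) (nat (- lev))"
  have terms: "\<forall>r<nat (- lev). arr (cup_x r \<cdot> f r) \<and> dom (cup_x r \<cdot> f r) = dn \<odot> up \<and> cod (cup_x r \<cdot> f r) = dn \<odot> up"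
    using arr_f assms(1) by simp
  have "g = g \<cdot> (t \<cdot> tau \<boxplus> ?S)"
    using inverse_neg(1) assms by simp
  also have "\<dots> = (g \<cdot> t) \<cdot> tau \<boxplus> g \<cdot> ?S"
    using assms arr_msum[OF terms] by (simp add: comp_add_right comp_assoc)
  also have "g \<cdot> ?S = msum C (dn \<odot> up) (cod g) (\<lambda>r. (g \<cdot> cup_x r) \<cdot> f r) (nat (- lev))"
    using terms assms arr_f by (simp add: msum_comp_left msum_cong comp_assoc)
  finally show ?thesis .
qed

definition dot_pair :: "'m \<Rightarrow> 'm \<Rightarrow> bool" where
  "dot_pair \<Phi> \<Psi> \<longleftrightarrow> \<Phi> \<in> hom C (up \<odot> dn) (up \<odot> dn) \<and> \<Psi> \<in> hom C (dn \<odot> up) (dn \<odot> up) \<and>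
     t \<cdot> \<Phi> = \<Psi> \<cdot> t \<boxplus> mneg (c \<cdot> d) \<and>
     (\<forall>r. cap_x r \<cdot> \<Phi> = cap_x (Suc r)) \<and> (\<forall>r. \<Psi> \<cdot> cup_x r = cup_x (Suc r))"

lemma dot_pairD:
  assumes "dot_pair \<Phi> \<Psi>"
  shows "arr \<Phi>" "dom \<Phi> = up \<odot> dn" "cod \<Phi> = up \<odot> dn" "arr \<Psi>" "dom \<Psi> = dn \<odot> up" "cod \<Psi> = dn \<odot> up"
    and "t \<cdot> \<Phi> = \<Psi> \<cdot> t \<boxplus> mneg (c \<cdot> d)"
    and "cap_x r \<cdot> \<Phi> = cap_x (Suc r)" "\<Psi> \<cdot> cup_x r = cup_x (Suc r)"
  using assms in_homD unfolding dot_pair_def by blast+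

lemma dot_pair_x: "dot_pair (whisker U x dn) (whisker dn x U)"
  unfolding dot_pair_def
  by (simp add: in_homI t_comp_x cap_x_comp_x x_comp_cup_x)

lemma dot_pair_x': "dot_pair (whisker up x' U) (whisker U x' up)"
  unfolding dot_pair_def
  by (simp add: in_homI t_comp_x' cap_x_comp_x' x'_comp_cup_x)

lemma dot_pair_comp_tau_nonneg:
  assumes "0 \<le> lev" and dp: "dot_pair \<Phi> \<Psi>"
  shows "\<Phi> \<cdot> tau = tau \<cdot> \<Psi> \<boxplus> mneg (c' \<cdot> d')"
proof -
  define K where "K = nat lev"
  note dp' = dot_pairD[OF dp]
  have "t \<cdot> (\<Phi> \<cdot> tau) = (\<Psi> \<cdot> t \<boxplus> mneg (c \<cdot> d)) \<cdot> tau"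
    using dp' by (simp add: comp_assoc[symmetric])
  also have "\<dots> = \<Psi> \<boxplus> mneg (c \<cdot> (d \<cdot> tau))"
    using dp' by (simp add: comp_add_left comp_assoc inverse_nonneg(2)[OF assms(1)])
  moreover have "msum C (dn \<odot> up) (up \<odot> dn) (\<lambda>r. e r \<cdot> (cap_x r \<cdot> (\<Phi> \<cdot> tau))) K
      = msum C (dn \<odot> up) (up \<odot> dn) (\<lambda>r. e r \<cdot> (cap_x (Suc r) \<cdot> tau)) K"
    using dp' by (intro msum_cong) (simp add: comp_assoc[symmetric])
  ultimately have \<Phi>\<tau>: "\<Phi> \<cdot> tau = tau \<cdot> \<Psi> \<boxplus> mneg (tau \<cdot> (c \<cdot> (d \<cdot> tau)))
      \<boxplus> msum C (dn \<odot> up) (up \<odot> dn) (\<lambda>r. e r \<cdot> (cap_x (Suc r) \<cdot> tau)) K"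
    using identity_expansion_nonneg[OF assms(1), of "\<Phi> \<cdot> tau"] dp' K_def by (simp add: comp_add_right)
  show ?thesis
  proof (cases "K = 0")
    case True
    then have "lev \<le> 0" "nat (- lev) = 0" "nat lev = 0" using K_def assms(1) by simp_all
    then have "c' \<cdot> d' = tau \<cdot> (c \<cdot> (d \<cdot> tau))"
      using c'_nonpos d'_nonneg[OF assms(1)] by (simp add: comp_assoc)
    then show ?thesis using \<Phi>\<tau> True dp' by simp
  next
    case False
    have "d \<cdot> tau = Z (dn \<odot> up) U"
      using inverse_nonneg(4)[OF assms(1), of 0] False K_def by simp
    \<comment> \<open>\<open>cap_x (Suc r) \<cdot> tau\<close> vanishes unless \<open>Suc r = K\<close>\<close>
    moreover have "msum C (dn \<odot> up) (up \<odot> dn) (\<lambda>r. e r \<cdot> (cap_x (Suc r) \<cdot> tau)) K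
        = e (K - 1) \<cdot> (cap_x K \<cdot> tau)"
      using False K_def assms(1) inverse_nonneg(4) arr_e by (subst msum_eq_last) auto
    ultimately show ?thesis
      using \<Phi>\<tau> False K_def assms(1) dp' arr_e[of "K - 1"] by (simp add: c'_pos d'_nonneg)
  qed
qed

lemma dot_pair_comp_tau_neg:
  assumes "lev < 0" and dp: "dot_pair \<Phi> \<Psi>"
  shows "\<Phi> \<cdot> tau = tau \<cdot> \<Psi> \<boxplus> mneg (c' \<cdot> d')"
proof -
  define K where "K = nat (- lev)"
  have "0 < K" using assms(1) K_def by simp
  note dp' = dot_pairD[OF dp]
  have \<Psi>t: "\<Psi> \<cdot> t = t \<cdot> \<Phi> \<boxplus> c \<cdot> d"
    using eq_add_imp_eq_add_mneg[OF _ _ _ _ dp'(7)] dp' by simp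
  have "tau \<cdot> c = Z U (up \<odot> dn)"
    using inverse_neg(3)[OF assms(1), of 0] \<open>0 < K\<close> K_def by simp
  have "tau \<cdot> (\<Psi> \<cdot> t) = (tau \<cdot> t) \<cdot> \<Phi> \<boxplus> (tau \<cdot> c) \<cdot> d"
    using dp' by (simp add: \<Psi>t comp_add_right comp_assoc)
  also have "\<dots> = \<Phi>"
    using dp' \<open>tau \<cdot> c = Z U (up \<odot> dn)\<close> by (simp add: inverse_neg(2)[OF assms(1)])
  finally have head: "(tau \<cdot> \<Psi>) \<cdot> t = \<Phi>"
    using dp' by (simp add: comp_assoc)
  \<comment> \<open>\<open>tau \<cdot> cup_x (Suc r)\<close> vanishes unless \<open>Suc r = K\<close>\<close>
  have "msum C (dn \<odot> up) (up \<odot> dn) (\<lambda>r. ((tau \<cdot> \<Psi>) \<cdot> cup_x r) \<cdot> f r) K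
      = msum C (dn \<odot> up) (up \<odot> dn) (\<lambda>r. (tau \<cdot> cup_x (Suc r)) \<cdot> f r) K"
    using dp' by (intro msum_cong) (simp add: comp_assoc)
  also have "\<dots> = (tau \<cdot> cup_x K) \<cdot> f (K - 1)"
    using \<open>0 < K\<close> K_def assms(1) inverse_neg(3) arr_f by (subst msum_eq_last) auto
  also have "\<dots> = c' \<cdot> d'"
    using assms(1) K_def by (simp add: c'_nonpos d'_neg)
  finally have sum: "msum C (dn \<odot> up) (up \<odot> dn) (\<lambda>r. ((tau \<cdot> \<Psi>) \<cdot> cup_x r) \<cdot> f r) K = c' \<cdot> d'" .
  have "tau \<cdot> \<Psi> = \<Phi> \<cdot> tau \<boxplus> c' \<cdot> d'"
    using identity_expansion_neg[OF assms(1), of "tau \<cdot> \<Psi>"] dp' K_def head sum by simp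
  then show ?thesis
    using eq_add_imp_eq_add_mneg[of "\<Phi> \<cdot> tau" "c' \<cdot> d'"] dp' by simp
qed

lemma dot_pair_comp_tau:
  "dot_pair \<Phi> \<Psi> \<Longrightarrow> \<Phi> \<cdot> tau = tau \<cdot> \<Psi> \<boxplus> mneg (c' \<cdot> d')"
  using dot_pair_comp_tau_nonneg dot_pair_comp_tau_neg by (cases "0 \<le> lev") simp_all

lemma msub_tau_dot_pair: "dot_pair \<Phi> \<Psi> \<Longrightarrow> msub C (tau \<cdot> \<Psi>) (\<Phi> \<cdot> tau) = c' \<cdot> d'"
  using dot_pair_comp_tau msub_add_mneg_cancel dot_pairD by simp

lemma d'_comp_dot_pair_nonneg:
  assumes "0 \<le> lev" and dp: "dot_pair \<Phi> \<Psi>"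
  shows "d' \<cdot> \<Psi> = cap_x (Suc (nat lev)) \<cdot> tau \<boxplus> cap_x (nat lev) \<cdot> (c' \<cdot> d')"
proof -
  note dp' = dot_pairD[OF dp]
  have "tau \<cdot> \<Psi> = \<Phi> \<cdot> tau \<boxplus> c' \<cdot> d'"
    using eq_add_imp_eq_add_mneg[OF _ _ _ _ dot_pair_comp_tau[OF dp]] dp' by simp
  then have "d' \<cdot> \<Psi> = cap_x (nat lev) \<cdot> (\<Phi> \<cdot> tau \<boxplus> c' \<cdot> d')"
    using dp' by (simp add: d'_nonneg[OF assms(1)] comp_assoc)
  then show ?thesis
    using dp' by (simp add: comp_add_right comp_assoc[symmetric])
qed

lemma d'_comp_dot_pair_neg:
  assumes "lev < 0" and dp: "dot_pair \<Phi> \<Psi>"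
  shows "d' \<cdot> \<Psi> = d' \<cdot> (c \<cdot> (d \<cdot> tau))
    \<boxplus> msum C (dn \<odot> up) U (\<lambda>r. (d' \<cdot> cup_x (Suc r)) \<cdot> f r) (nat (- lev))"
proof -
  note dp' = dot_pairD[OF dp]
  have d't: "d' \<cdot> t = Z (up \<odot> dn) U"
    using inverse_neg(4)[OF assms(1)] assms(1) by (simp add: d'_neg)
  have \<Psi>t: "\<Psi> \<cdot> t = t \<cdot> \<Phi> \<boxplus> c \<cdot> d"
    using eq_add_imp_eq_add_mneg[OF _ _ _ _ dp'(7)] dp' by simp
  have "((d' \<cdot> \<Psi>) \<cdot> t) \<cdot> tau = (d' \<cdot> (\<Psi> \<cdot> t)) \<cdot> tau"
    using dp'(1-6) by (simp add: comp_assoc)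
  also have "\<dots> = ((d' \<cdot> t) \<cdot> \<Phi> \<boxplus> d' \<cdot> (c \<cdot> d)) \<cdot> tau"
    unfolding \<Psi>t using dp'(1-6) by (simp add: comp_add_right comp_assoc)
  also have "\<dots> = d' \<cdot> (c \<cdot> (d \<cdot> tau))"
    using dp'(1-6) d't by (simp add: comp_assoc)
  finally have "((d' \<cdot> \<Psi>) \<cdot> t) \<cdot> tau = d' \<cdot> (c \<cdot> (d \<cdot> tau))" .
  moreover have "msum C (dn \<odot> up) U (\<lambda>r. ((d' \<cdot> \<Psi>) \<cdot> cup_x r) \<cdot> f r) (nat (- lev))
      = msum C (dn \<odot> up) U (\<lambda>r. (d' \<cdot> cup_x (Suc r)) \<cdot> f r) (nat (- lev))"
    using dp' by (intro msum_cong) (simp add: comp_assoc)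
  ultimately show ?thesis
    using identity_expansion_neg[OF assms(1), of "d' \<cdot> \<Psi>"] dp' by simp
qed

lemma d'_comp_dot_pair_eq:
  assumes "dot_pair \<Phi> \<Psi>" "dot_pair \<Phi>' \<Psi>'"
  shows "d' \<cdot> \<Psi> = d' \<cdot> \<Psi>'"
  using d'_comp_dot_pair_nonneg[OF _ assms(1)] d'_comp_dot_pair_nonneg[OF _ assms(2)]
    d'_comp_dot_pair_neg[OF _ assms(1)] d'_comp_dot_pair_neg[OF _ assms(2)]
  by (cases "0 \<le> lev") simp_all

lemma dot_pair_comp_c'_nonpos:
  assumes "lev \<le> 0" and dp: "dot_pair \<Phi> \<Psi>"
  shows "\<Phi> \<cdot> c' = tau \<cdot> cup_x (Suc (nat (- lev))) \<boxplus> mneg (c' \<cdot> (d' \<cdot> cup_x (nat (- lev))))"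
proof -
  note dp' = dot_pairD[OF dp]
  have "\<Phi> \<cdot> c' = (tau \<cdot> \<Psi> \<boxplus> mneg (c' \<cdot> d')) \<cdot> cup_x (nat (- lev))"
    using dp' dot_pair_comp_tau[OF dp, symmetric] by (simp add: c'_nonpos[OF assms(1)] comp_assoc)
  then show ?thesis
    using dp' by (simp add: comp_add_left comp_assoc)
qed

lemma dot_pair_comp_e:
  assumes "0 \<le> lev" "q < nat lev" and dp: "dot_pair \<Phi> \<Psi>"
  shows "\<Phi> \<cdot> e q = mneg (tau \<cdot> (c \<cdot> (d \<cdot> e q)))
    \<boxplus> msum C U (up \<odot> dn) (\<lambda>r. e r \<cdot> (cap_x (Suc r) \<cdot> e q)) (nat lev)"
proof -
  note dp' = dot_pairD[OF dp]
  have eq: "arr (e q)" "dom (e q) = U" "cod (e q) = up \<odot> dn" using arr_e assms(1,2) by simp_all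
  have "t \<cdot> (\<Phi> \<cdot> e q) = (\<Psi> \<cdot> t \<boxplus> mneg (c \<cdot> d)) \<cdot> e q"
    using dp' eq by (simp add: comp_assoc[symmetric])
  also have "\<dots> = mneg (c \<cdot> (d \<cdot> e q))"
    using dp' eq inverse_nonneg(3)[OF assms(1,2)] by (simp add: comp_add_left comp_assoc)
  finally have head: "t \<cdot> (\<Phi> \<cdot> e q) = mneg (c \<cdot> (d \<cdot> e q))" .
  have "msum C U (up \<odot> dn) (\<lambda>r. e r \<cdot> (cap_x r \<cdot> (\<Phi> \<cdot> e q))) (nat lev)
      = msum C U (up \<odot> dn) (\<lambda>r. e r \<cdot> (cap_x (Suc r) \<cdot> e q)) (nat lev)"
    using dp' eq by (intro msum_cong) (simp add: comp_assoc[symmetric])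
  then show ?thesis
    using identity_expansion_nonneg[OF assms(1), of "\<Phi> \<cdot> e q"] dp' eq head by simp
qed

lemma dot_pair_comp_c'_eq:
  assumes "dot_pair \<Phi> \<Psi>" "dot_pair \<Phi>' \<Psi>'"
  shows "\<Phi> \<cdot> c' = \<Phi>' \<cdot> c'"
proof (cases "0 < lev")
  case True
  have "\<Phi>'' \<cdot> c' = mneg (\<Phi>'' \<cdot> e (nat lev - 1))" if "dot_pair \<Phi>'' \<Psi>''" for \<Phi>'' \<Psi>''
    using True arr_e[of "nat lev - 1"] dot_pairD[OF that] by (simp add: c'_pos)
  then show ?thesis
    using assms True dot_pair_comp_e[of "nat lev - 1"] by simp
qed (use assms dot_pair_comp_c'_nonpos in simp)

end

theorem lemma2p2:
  fixes C :: "('o,'m,'k::comm_ring_1) slmcat"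
    and lev :: int and up dn :: 'o and x s c d tau :: 'm and e f :: "nat \<Rightarrow> 'm"
  assumes "slm_cat C"
    and "heis_rels C lev up dn x s c d tau e f"
  shows "let c' = heis_c' C lev up dn x c tau e; d' = heis_d' C lev up dn x d tau f;
             x' = heis_x' C dn x c d; I = ident C in
         msub C (comp C tau (tens C x' (I up))) (comp C (tens C (I up) x') tau) = comp C c' d' \<and>
         msub C (comp C tau (tens C (I dn) x)) (comp C (tens C x (I dn)) tau) = comp C c' d' \<and>
         comp C d' (tens C (I dn) x) = comp C d' (tens C x' (I up)) \<and>
         comp C (tens C x (I dn)) c' = comp C (tens C (I up) x') c'"
proof -
  interpret heisenberg C lev up dn x s c d tau e f
    using assms by unfold_locales
  note x = dot_pair_x and x' = dot_pair_x'
  show ?thesis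
    unfolding Let_def
    using msub_tau_dot_pair[OF x] msub_tau_dot_pair[OF x'] d'_comp_dot_pair_eq[OF x x']
      dot_pair_comp_c'_eq[OF x x']
    by simp
qed

end
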